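(* Let $f:\mathbb R^d\to[0,\infty)$ be $C^2$ with $f^*:=f(x^* )=\sup_xf(x)<\infty$ for some $x^*$, and suppose $$K_f:=\frac12\sup_{x\in\mathbb R^d}\sum_{i,j=1}^d|\partial^2_{ij}f(x)|<\infty,\qquad\lambda:=\int_{\mathbb R^d}f(x)dx\in(0,\infty).$$ Let $X_1,\dots,X_N$ be i.i.d. with law $f(x)dx/\lambda$. Then for any $\beta\in(0,4/d)$ and $N>(f^* )^{2/\beta}$, $$\mathbb E\Big|\sup_{n=1,\dots,N}f(X_n)-f^*\Big|^2\le N^{-\beta}+(f^* )^2\exp\Big\{-(f^*-N^{-\beta/2})K_f^{-d/2}N^{1-d\beta/4}/\lambda\Big\}.$$ In particular $\lim_{N\to\infty}\mathbb E|\sup_{n\le N}f(X_n)-f^*|^2=0$. *)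

theory Defs
  imports "HOL-Probability.Probability"
begin

definition partial :: "'d::finite \<Rightarrow> (real^'d \<Rightarrow> real) \<Rightarrow> real^'d \<Rightarrow> real" where
  "partial i g x = deriv (\<lambda>t. g (x + t *\<^sub>R axis i 1)) 0"

definition C2 :: "(real^'d::finite \<Rightarrow> real) \<Rightarrow> bool" where
  "C2 g \<longleftrightarrow>
     (\<forall>i x. (\<lambda>t. g (x + t *\<^sub>R axis i 1)) differentiable (at 0)) \<and>
     (\<forall>i j x. (\<lambda>t. partial i g (x + t *\<^sub>R axis j 1)) differentiable (at 0)) \<and>
     continuous_on UNIV g \<and>
     (\<forall>i. continuous_on UNIV (partial i g)) \<and>
     (\<forall>i j. continuous_on UNIV (partial j (partial i g)))"

definition hess_abs_sum :: "(real^'d::finite \<Rightarrow> real) \<Rightarrow> real^'d \<Rightarrow> real" where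
  "hess_abs_sum g x = (\<Sum>i\<in>UNIV. \<Sum>j\<in>UNIV. \<bar>partial i (partial j g) x\<bar>)"

definition Kconst :: "(real^'d::finite \<Rightarrow> real) \<Rightarrow> real" where
  "Kconst g = (1/2) * (SUP x. hess_abs_sum g x)"

end

theory Submission
  imports Defs
begin

text \<open>Near its maximiser \<open>x\<^sup>*\<close> a \<open>C\<^sup>2\<close> function whose Hessian entries sum to at most \<open>2 K\<^sub>f\<close>
  satisfies \<open>f \<ge> f\<^sup>* - K\<^sub>f r\<^sup>2\<close> on the cube of side \<open>2r\<close> around \<open>x\<^sup>*\<close> (Taylor, with vanishing gradient).
  With \<open>K\<^sub>f r\<^sup>2 = \<epsilon> = N powr (-\<beta>/2)\<close>, each sample reaches \<open>f\<^sup>* - \<epsilon>\<close> with probability at least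
  \<open>p = (f\<^sup>* - \<epsilon>) (2r)\<^sup>d / \<lambda>\<close>. The squared gap of the maximum exceeds \<open>\<epsilon>\<^sup>2\<close> only if all \<open>N\<close> samples
  miss, which by independence has probability at most \<open>(1 - p)\<^sup>N \<le> exp (-N p)\<close>, and it never exceeds
  \<open>(f\<^sup>*)\<^sup>2\<close>. For the limit, continuity alone yields such a cube for every fixed \<open>\<epsilon>\<close>.\<close>

section \<open>Taylor bound near a maximum\<close>

lemma increment_linearization_bound:
  fixes g g' :: "real \<Rightarrow> real"
  assumes deriv: "\<And>t. (g has_real_derivative g' t) (at t)"
    and close: "\<And>t. \<bar>t\<bar> \<le> \<bar>a\<bar> \<Longrightarrow> \<bar>g' t - c\<bar> \<le> e"
  shows "\<bar>g a - g 0 - a * c\<bar> \<le> e * \<bar>a\<bar>"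
proof -
  have "\<exists>t. \<bar>t\<bar> \<le> \<bar>a\<bar> \<and> g a - g 0 = g' t * a"
  proof (cases "0 \<le> a")
    case True
    have "\<exists>t\<in>{0..a}. g a - g 0 = (*) (g' t) (a - 0)"
      by (rule mvt_very_simple[OF True])
        (auto intro: has_derivative_at_withinI deriv[unfolded has_field_derivative_def])
    then show ?thesis using True by force
  next
    case False
    have "\<exists>t\<in>{a..0}. g 0 - g a = (*) (g' t) (0 - a)"
      using False by (intro mvt_very_simple)
        (auto intro: has_derivative_at_withinI deriv[unfolded has_field_derivative_def])
    then obtain t where "t \<in> {a..0}" "g 0 - g a = g' t * (0 - a)" ..
    with False show ?thesis by (intro exI[of _ t]) (auto simp: algebra_simps)
  qed
  then obtain t where t: "\<bar>t\<bar> \<le> \<bar>a\<bar>" "g a - g 0 - a * c = (g' t - c) * a"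
    by (auto simp: algebra_simps)
  show ?thesis
    unfolding t(2) abs_mult using close[OF t(1)] by (simp add: mult_right_mono)
qed

lemma has_real_derivative_partial:
  fixes F :: "real^'d \<Rightarrow> real"
  assumes diff: "\<And>x. (\<lambda>t. F (x + t *\<^sub>R axis i 1)) differentiable (at 0)"
  shows "((\<lambda>t. F (y + t *\<^sub>R axis i 1)) has_real_derivative partial i F (y + s *\<^sub>R axis i 1)) (at s)"
proof -
  define z where "z = y + s *\<^sub>R axis i (1::real)"
  define G where "G = (\<lambda>u. F (z + u *\<^sub>R axis i 1))"
  have "(G has_real_derivative partial i F z) (at (s + - s))"
    unfolding G_def partial_def using diff[of z] DERIV_deriv_iff_real_differentiable by simp
  then have "((\<lambda>u. G (u + - s)) has_real_derivative partial i F z) (at s)"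
    by (subst (asm) DERIV_shift)
  moreover have "(\<lambda>u. G (u + - s)) = (\<lambda>t. F (y + t *\<^sub>R axis i 1))"
    by (auto simp: G_def z_def algebra_simps)
  ultimately show ?thesis by (simp add: z_def)
qed

lemma sum_scaleR_axis_nth:
  fixes h :: "real^'d"
  shows "(\<Sum>k\<in>S. h$k *\<^sub>R axis k (1::real)) $ j = (if j \<in> S then h$j else 0)"
proof -
  have "(\<Sum>k\<in>S. h$k *\<^sub>R axis k (1::real)) $ j = (\<Sum>k\<in>S. h$k * (if j = k then 1 else 0))"
    by (subst sum_component) (simp add: axis_def)
  also have "\<dots> = (\<Sum>k\<in>S. if j = k then h$j else 0)"
    by (intro sum.cong) auto
  finally show ?thesis by (simp add: sum.delta' cong: if_cong)
qed

text \<open>Moving one coordinate at a time from \<open>x\<close> and applying the mean value theorem to each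
  coordinate move bounds the error of the linearization by the oscillation of the partials.\<close>
lemma partial_increment_bound:
  fixes F :: "real^'d \<Rightarrow> real"
  assumes diff: "\<And>i x. (\<lambda>t. F (x + t *\<^sub>R axis i 1)) differentiable (at 0)"
    and close: "\<And>y i. norm (y - x) < \<delta> \<Longrightarrow> \<bar>partial i F y - partial i F x\<bar> \<le> e"
    and h: "norm h < \<delta>"
  shows "\<bar>F (x + (\<Sum>i\<in>S. h$i *\<^sub>R axis i 1)) - F x - (\<Sum>i\<in>S. h$i * partial i F x)\<bar>
          \<le> e * (\<Sum>i\<in>S. \<bar>h$i\<bar>)"
proof (induction S rule: infinite_finite_induct)
  case (insert i S)
  define y where "y = x + (\<Sum>i\<in>S. h$i *\<^sub>R axis i (1::real))"
  define g where "g = (\<lambda>t. F (y + t *\<^sub>R axis i 1))"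
  have segment_close: "\<bar>partial i F (y + t *\<^sub>R axis i 1) - partial i F x\<bar> \<le> e"
    if t: "\<bar>t\<bar> \<le> \<bar>h$i\<bar>" for t
  proof (rule close)
    have "norm (y + t *\<^sub>R axis i 1 - x) \<le> norm h"
    proof (rule norm_le_componentwise_cart)
      fix j
      have "(y + t *\<^sub>R axis i 1 - x) $ j
              = (\<Sum>k\<in>S. h$k *\<^sub>R axis k (1::real)) $ j + t * (axis i 1 $ j)"
        by (simp only: y_def add.assoc add_diff_cancel_left' vector_add_component
            vector_scaleR_component real_scaleR_def)
      then have "(y + t *\<^sub>R axis i 1 - x) $ j = (if j \<in> S then h$j else 0) + (if j = i then t else 0)"
        by (simp only: sum_scaleR_axis_nth) (simp add: axis_def)
      then show "norm ((y + t *\<^sub>R axis i 1 - x) $ j) \<le> norm (h $ j)"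
        using t insert(2) by auto
    qed
    then show "norm (y + t *\<^sub>R axis i 1 - x) < \<delta>" using h by simp
  qed
  have step: "\<bar>g (h$i) - g 0 - h$i * partial i F x\<bar> \<le> e * \<bar>h$i\<bar>"
    unfolding g_def
    by (rule increment_linearization_bound[OF has_real_derivative_partial[OF diff] segment_close])
  have "x + (\<Sum>i\<in>insert i S. h$i *\<^sub>R axis i 1) = y + h$i *\<^sub>R axis i 1"
    using insert by (simp add: y_def algebra_simps)
  then show ?case
    using step insert.IH insert(1,2) by (simp add: g_def y_def algebra_simps)
qed simp_all

lemma has_derivative_continuous_partials:
  fixes F :: "real^'d \<Rightarrow> real"
  assumes diff: "\<And>i x. (\<lambda>t. F (x + t *\<^sub>R axis i 1)) differentiable (at 0)"
    and cont: "\<And>i. continuous_on UNIV (partial i F)"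
  shows "(F has_derivative (\<lambda>v. \<Sum>i\<in>UNIV. v$i * partial i F x)) (at x)"
  unfolding has_derivative_at_alt
proof (intro conjI allI impI)
  show "bounded_linear (\<lambda>v. \<Sum>i\<in>UNIV. v$i * partial i F x)"
    by (intro bounded_linear_sum)
      (auto intro: bounded_linear_compose[OF bounded_linear_mult_left bounded_linear_vec_nth])
  fix e :: real assume e: "e > 0"
  define e' where "e' = e / real CARD('d)"
  have e': "e' > 0" using e by (simp add: e'_def)
  have "\<forall>\<^sub>F y in at x. dist (partial i F y) (partial i F x) < e'" for i
    using cont[of i] e' by (intro tendstoD) (auto simp: continuous_on_eq_continuous_at isCont_def)
  then have "\<forall>\<^sub>F y in at x. \<forall>i. dist (partial i F y) (partial i F x) < e'"
    by (rule eventually_all_finite)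
  then obtain d where d: "d > 0"
    and d_close: "\<And>y. y \<noteq> x \<Longrightarrow> dist y x < d \<Longrightarrow> \<forall>i. dist (partial i F y) (partial i F x) < e'"
    unfolding eventually_at by blast
  have close: "\<bar>partial i F y - partial i F x\<bar> \<le> e'" if "norm (y - x) < d" for y i
    using d_close[of y] that e' by (cases "y = x") (auto simp: dist_norm dest!: spec[of _ i])
  show "\<exists>d>0. \<forall>y. norm (y - x) < d \<longrightarrow>
          norm (F y - F x - (\<Sum>i\<in>UNIV. (y - x) $ i * partial i F x)) \<le> e * norm (y - x)"
  proof (intro exI[of _ d] conjI allI impI d)
    fix y assume y: "norm (y - x) < d"
    have "(\<Sum>i\<in>UNIV. (y - x)$i *\<^sub>R axis i (1::real)) = y - x"
      using basis_expansion[of "y - x"] by (simp add: scalar_mult_eq_scaleR)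
    then have "\<bar>F y - F x - (\<Sum>i\<in>UNIV. (y - x)$i * partial i F x)\<bar> \<le> e' * (\<Sum>i\<in>UNIV. \<bar>(y - x)$i\<bar>)"
      using partial_increment_bound[OF diff close y, of UNIV] by simp
    also have "\<dots> \<le> e' * (\<Sum>i\<in>(UNIV::'d set). norm (y - x))"
      using e' component_le_norm_cart[of "y - x"] by (intro mult_left_mono sum_mono) auto
    also have "\<dots> = e * norm (y - x)" by (simp add: e'_def)
    finally show "norm (F y - F x - (\<Sum>i\<in>UNIV. (y - x) $ i * partial i F x)) \<le> e * norm (y - x)"
      by simp
  qed
qed

lemma has_real_derivative_along_line:
  fixes F :: "real^'d \<Rightarrow> real"
  assumes D: "\<And>y. (F has_derivative (\<lambda>v. \<Sum>i\<in>UNIV. v$i * D i y)) (at y)"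
  shows "((\<lambda>t. F (a + t *\<^sub>R h)) has_real_derivative (\<Sum>i\<in>UNIV. h$i * D i (a + t *\<^sub>R h))) (at t)"
proof -
  have "((\<lambda>t. a + t *\<^sub>R h) has_derivative (\<lambda>s. s *\<^sub>R h)) (at t)"
    by (auto intro!: derivative_eq_intros)
  from diff_chain_at[OF this D]
  have "(F \<circ> (\<lambda>t. a + t *\<^sub>R h) has_derivative
          (\<lambda>v. \<Sum>i\<in>UNIV. v$i * D i (a + t *\<^sub>R h)) \<circ> (\<lambda>s. s *\<^sub>R h)) (at t)" .
  moreover have "(\<lambda>v. \<Sum>i\<in>UNIV. v$i * D i (a + t *\<^sub>R h)) \<circ> (\<lambda>s. s *\<^sub>R h)
                   = (*) (\<Sum>i\<in>UNIV. h$i * D i (a + t *\<^sub>R h))"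
    by (auto simp: fun_eq_iff sum_distrib_left algebra_simps)
  ultimately show ?thesis by (simp add: has_field_derivative_def o_def)
qed

text \<open>Second-order Taylor expansion along the segment from \<open>xstar\<close> to \<open>xstar + h\<close>; the gradient
  vanishes at the maximum.\<close>
lemma C2_ge_near_max:
  fixes f :: "real^'d \<Rightarrow> real"
  assumes C2: "C2 f"
    and max: "\<And>x. f x \<le> f xstar"
    and Kfin: "bdd_above (range (hess_abs_sum f))"
    and h: "\<And>i. \<bar>h$i\<bar> \<le> r"
  shows "f xstar - Kconst f * r\<^sup>2 \<le> f (xstar + h)"
proof -
  from C2 have diff1: "\<And>i x. (\<lambda>t. f (x + t *\<^sub>R axis i 1)) differentiable (at 0)"
    and diff2: "\<And>i j x. (\<lambda>t. partial i f (x + t *\<^sub>R axis j 1)) differentiable (at 0)"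
    and cont1: "\<And>i. continuous_on UNIV (partial i f)"
    and cont2: "\<And>i j. continuous_on UNIV (partial j (partial i f))"
    unfolding C2_def by auto
  define g1 where "g1 = (\<lambda>t. \<Sum>i\<in>UNIV. h$i * partial i f (xstar + t *\<^sub>R h))"
  define g2 where
    "g2 = (\<lambda>t. \<Sum>i\<in>UNIV. h$i * (\<Sum>j\<in>UNIV. h$j * partial j (partial i f) (xstar + t *\<^sub>R h)))"
  define g where "g = (\<lambda>t. f (xstar + t *\<^sub>R h))"
  have dg: "(g has_real_derivative g1 t) (at t)" for t
    unfolding g_def g1_def
    by (rule has_real_derivative_along_line[OF has_derivative_continuous_partials[OF diff1 cont1]])
  have dg1: "(g1 has_real_derivative g2 t) (at t)" for t
    unfolding g1_def g2_def
    by (intro DERIV_sum DERIV_cmult has_real_derivative_along_line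
        has_derivative_continuous_partials[OF diff2 cont2])
  have "partial i f xstar = 0" for i
  proof -
    have "((\<lambda>s. f (xstar + s *\<^sub>R axis i 1)) has_real_derivative partial i f xstar) (at 0)"
      using has_real_derivative_partial[OF diff1, where y=xstar and s=0] by simp
    then show ?thesis by (rule DERIV_local_max[where d=1]) (auto intro: max)
  qed
  then have g1_0: "g1 0 = 0" by (simp add: g1_def)
  define diff where "diff = (\<lambda>m::nat. if m = 0 then g else if m = 1 then g1 else g2)"
  have "\<exists>t::real. 0 < t \<and> t < 1 \<and>
      g 1 = (\<Sum>m<2. diff m 0 / fact m * 1 ^ m) + diff 2 t / fact 2 * 1 ^ 2"
    by (rule Maclaurin) (auto simp: diff_def dg dg1 less_2_cases_iff)
  then obtain t where t: "g 1 = g 0 + g1 0 + g2 t / 2"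
    by (auto simp: diff_def eval_nat_numeral)
  define y where "y = xstar + t *\<^sub>R h"
  have "\<bar>g2 t\<bar> \<le> (\<Sum>i\<in>UNIV. \<Sum>j\<in>UNIV. \<bar>h$i\<bar> * (\<bar>h$j\<bar> * \<bar>partial j (partial i f) y\<bar>))"
    unfolding g2_def y_def[symmetric]
    by (rule order_trans[OF sum_abs])
      (auto intro!: sum_mono order_trans[OF sum_abs] simp: abs_mult sum_distrib_left)
  also have "\<dots> \<le> (\<Sum>i\<in>UNIV. \<Sum>j\<in>UNIV. r * (r * \<bar>partial j (partial i f) y\<bar>))"
    using h by (intro sum_mono mult_mono) (auto intro: order_trans[OF abs_ge_zero h])
  also have "\<dots> = r\<^sup>2 * hess_abs_sum f y"
    unfolding hess_abs_sum_def
    by (subst sum.swap) (simp add: sum_distrib_left power2_eq_square algebra_simps)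
  also have "\<dots> \<le> r\<^sup>2 * (2 * Kconst f)"
    unfolding Kconst_def using Kfin by (intro mult_left_mono) (auto intro: cSUP_upper)
  finally have "- (r\<^sup>2 * (2 * Kconst f)) \<le> g2 t" by (simp add: abs_le_iff)
  then show ?thesis using t g1_0 by (simp add: g_def algebra_simps)
qed

section \<open>The maximum of independent samples\<close>

text \<open>The maximum misses \<open>c\<close> by more than \<open>\<epsilon>\<close> only if every sample lands below \<open>c - \<epsilon>\<close>, an event
  of probability at most \<open>(1 - p)\<^sup>N\<close> by independence; the squared gap never exceeds \<open>c\<^sup>2\<close>.\<close>
lemma (in prob_space) expectation_max_gap_le:
  fixes X :: "nat \<Rightarrow> 'a \<Rightarrow> real^'d" and f :: "real^'d \<Rightarrow> real"
  assumes indep: "indep_vars (\<lambda>_. borel) X {1..N}"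
    and N: "N \<ge> 1"
    and f_meas: "f \<in> borel_measurable borel"
    and nonneg: "\<And>x. f x \<ge> 0" and max: "\<And>x. f x \<le> c"
    and eps: "\<epsilon> \<ge> 0"
    and p: "\<And>n. n \<in> {1..N} \<Longrightarrow> p \<le> prob {\<omega>\<in>space M. c - \<epsilon> \<le> f (X n \<omega>)}"
  shows "(\<integral>\<omega>. \<bar>Max ((\<lambda>n. f (X n \<omega>)) ` {1..N}) - c\<bar>\<^sup>2 \<partial>M) \<le> \<epsilon>\<^sup>2 + c\<^sup>2 * (1 - p) ^ N"
proof -
  have X_meas: "\<And>n. n \<in> {1..N} \<Longrightarrow> X n \<in> borel_measurable M"
    and isets: "indep_sets (\<lambda>i. {X i -` A \<inter> space M | A. A \<in> sets borel}) {1..N}"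
    using indep unfolding indep_vars_def2 by auto
  define B where "B = {x. f x < c - \<epsilon>}"
  have B_meas: "B \<in> sets borel" unfolding B_def using f_meas by measurable
  define bad where "bad = (\<Inter>n\<in>{1..N}. X n -` B \<inter> space M)"
  have bad_event: "bad \<in> events"
    unfolding bad_def using N B_meas X_meas by (intro sets.finite_INT) (auto intro: measurable_sets)
  have good_event: "{\<omega>\<in>space M. c - \<epsilon> \<le> f (X n \<omega>)} \<in> events" if "n \<in> {1..N}" for n
    using X_meas[OF that] f_meas by measurable
  have "prob bad = (\<Prod>n\<in>{1..N}. prob (X n -` B \<inter> space M))"
    unfolding bad_def using N B_meas by (intro indep_setsD[OF isets]) auto
  also have "\<dots> \<le> (\<Prod>n\<in>{1..N}. 1 - p)"
  proof (intro prod_mono conjI)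
    fix n assume n: "n \<in> {1..N}"
    have "X n -` B \<inter> space M = space M - {\<omega>\<in>space M. c - \<epsilon> \<le> f (X n \<omega>)}"
      by (auto simp: B_def)
    then show "prob (X n -` B \<inter> space M) \<le> 1 - p"
      using prob_compl[OF good_event[OF n]] p[OF n] by simp
  qed simp
  finally have prob_bad: "prob bad \<le> (1 - p) ^ N" by simp
  define m where "m = (\<lambda>\<omega>. Max ((\<lambda>n. f (X n \<omega>)) ` {1..N}))"
  have m_meas: "m \<in> borel_measurable M"
    unfolding m_def by (rule borel_measurable_Max) (auto intro: measurable_compose[OF X_meas f_meas])
  have m_bounds: "0 \<le> m \<omega> \<and> m \<omega> \<le> c" for \<omega>
  proof -
    have "m \<omega> \<in> (\<lambda>n. f (X n \<omega>)) ` {1..N}" unfolding m_def using N by (intro Max_in) auto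
    then show ?thesis using nonneg max by auto
  qed
  have gap_le: "\<bar>m \<omega> - c\<bar>\<^sup>2 \<le> c\<^sup>2" for \<omega>
    using m_bounds[of \<omega>] by (simp add: power2_commute power_mono)
  have "integrable M (\<lambda>\<omega>. \<bar>m \<omega> - c\<bar>\<^sup>2)"
    using m_meas gap_le by (intro integrable_const_bound[where B="c\<^sup>2"]) auto
  moreover have "\<bar>m \<omega> - c\<bar>\<^sup>2 \<le> \<epsilon>\<^sup>2 + c\<^sup>2 * indicator bad \<omega>" if \<omega>: "\<omega> \<in> space M" for \<omega>
  proof (cases "\<omega> \<in> bad")
    case True
    then show ?thesis using gap_le[of \<omega>] by (simp add: add_increasing)
  next
    case False
    then obtain n where n: "n \<in> {1..N}" "c - \<epsilon> \<le> f (X n \<omega>)"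
      using \<omega> N by (auto simp: bad_def B_def not_less)
    have "f (X n \<omega>) \<le> m \<omega>" unfolding m_def using n by (intro Max_ge) auto
    then have "0 \<le> c - m \<omega>" "c - m \<omega> \<le> \<epsilon>" using m_bounds[of \<omega>] n by auto
    then have "(c - m \<omega>)\<^sup>2 \<le> \<epsilon>\<^sup>2" by (intro power_mono)
    then show ?thesis using False by (simp add: power2_commute)
  qed
  ultimately have "(\<integral>\<omega>. \<bar>m \<omega> - c\<bar>\<^sup>2 \<partial>M) \<le> (\<integral>\<omega>. \<epsilon>\<^sup>2 + c\<^sup>2 * indicator bad \<omega> \<partial>M)"
    using bad_event
    by (intro integral_mono Bochner_Integration.integrable_add integrable_mult_right
        integrable_real_indicator) (auto simp: less_top[symmetric])
  also have "\<dots> = \<epsilon>\<^sup>2 + c\<^sup>2 * prob bad"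
    using bad_event by (subst Bochner_Integration.integral_add)
      (auto simp: less_top[symmetric] prob_space intro!: integrable_mult_right integrable_real_indicator)
  also have "\<dots> \<le> \<epsilon>\<^sup>2 + c\<^sup>2 * (1 - p) ^ N"
    using prob_bad by (intro add_left_mono mult_left_mono) auto
  finally show ?thesis by (simp add: m_def)
qed

lemma (in prob_space) expectation_max_gap_le_sq:
  fixes X :: "nat \<Rightarrow> 'a \<Rightarrow> real^'d" and f :: "real^'d \<Rightarrow> real"
  assumes indep: "indep_vars (\<lambda>_. borel) X {1..N}"
    and N: "N \<ge> 1"
    and f_meas: "f \<in> borel_measurable borel"
    and nonneg: "\<And>x. f x \<ge> 0" and max: "\<And>x. f x \<le> c"
  shows "(\<integral>\<omega>. \<bar>Max ((\<lambda>n. f (X n \<omega>)) ` {1..N}) - c\<bar>\<^sup>2 \<partial>M) \<le> c\<^sup>2"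
proof -
  have "0 \<le> c" using nonneg max order_trans by blast
  have "(\<integral>\<omega>. \<bar>Max ((\<lambda>n. f (X n \<omega>)) ` {1..N}) - c\<bar>\<^sup>2 \<partial>M) \<le> c\<^sup>2 + c\<^sup>2 * (1 - 1) ^ N"
  proof (rule expectation_max_gap_le[OF indep N f_meas nonneg max \<open>0 \<le> c\<close>])
    fix n
    have "{\<omega>\<in>space M. c - c \<le> f (X n \<omega>)} = space M" using nonneg by auto
    then show "1 \<le> prob {\<omega>\<in>space M. c - c \<le> f (X n \<omega>)}" by (simp add: prob_space)
  qed
  then show ?thesis using N by (simp add: power_0_left)
qed

lemma emeasure_lborel_cube:
  fixes x :: "real^'d"
  assumes "r \<ge> 0"
  shows "emeasure lborel {y. \<forall>i. \<bar>(y - x)$i\<bar> \<le> r} = ennreal ((2*r) ^ CARD('d))"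
proof -
  have cube: "{y. \<forall>i. \<bar>(y - x)$i\<bar> \<le> r} = cbox (x - (\<chi> i. r)) (x + (\<chi> i. r))"
    by (auto simp: mem_box_cart abs_le_iff algebra_simps)
  have side: "(\<chi> i. r) \<bullet> b = r" if "b \<in> Basis" for b :: "real^'d"
    using that by (auto simp: Basis_vec_def inner_axis)
  have "\<forall>b\<in>Basis. (x - (\<chi> i. r)) \<bullet> b \<le> (x + (\<chi> i. r)) \<bullet> b"
    using assms by (simp add: inner_diff_left inner_add_left side)
  moreover have "(\<Prod>b\<in>Basis. (x + (\<chi> i. r) - (x - (\<chi> i. r))) \<bullet> b) = (2 * r) ^ CARD('d)"
    by (simp only: inner_diff_left inner_add_left side cong: prod.cong) simp
  ultimately show ?thesis
    unfolding cube emeasure_lborel_cbox_eq by simp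
qed

lemma (in prob_space) prob_superlevel_ge_cube:
  fixes X :: "'a \<Rightarrow> real^'d" and f :: "real^'d \<Rightarrow> real"
  assumes distr: "distributed M lborel X (\<lambda>x. ennreal (f x / lam))"
    and lam: "lam > 0" and r: "r \<ge> 0" and a: "a \<ge> 0"
    and cube: "\<And>h. (\<And>i. \<bar>h$i\<bar> \<le> r) \<Longrightarrow> a \<le> f (x + h)"
    and f_meas: "f \<in> borel_measurable borel"
  shows "a * (2*r) ^ CARD('d) / lam \<le> prob {\<omega>\<in>space M. a \<le> f (X \<omega>)}"
proof -
  define C where "C = {y. \<forall>i. \<bar>(y - x)$i\<bar> \<le> r}"
  have C_meas: "C \<in> sets lborel"
    unfolding C_def by measurable
  have in_C: "a \<le> f y" if "y \<in> C" for y
    using cube[of "y - x"] that by (simp add: C_def)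
  have "ennreal (a / lam) * emeasure lborel C = (\<integral>\<^sup>+y. ennreal (a / lam) * indicator C y \<partial>lborel)"
    using C_meas by (simp add: nn_integral_cmult_indicator)
  also have "\<dots> \<le> (\<integral>\<^sup>+y. ennreal (f y / lam) * indicator C y \<partial>lborel)"
    using lam by (intro nn_integral_mono)
      (auto split: split_indicator intro!: ennreal_leI divide_right_mono in_C)
  also have "\<dots> = emeasure M (X -` C \<inter> space M)"
    by (rule distributed_emeasure[OF distr C_meas, symmetric])
  finally have "ennreal (a / lam) * ennreal ((2*r) ^ CARD('d)) \<le> ennreal (prob (X -` C \<inter> space M))"
    by (simp only: C_def emeasure_lborel_cube[OF r] emeasure_eq_measure)
  then have "ennreal (a / lam * (2*r) ^ CARD('d)) \<le> ennreal (prob (X -` C \<inter> space M))"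
    using a lam r by (subst ennreal_mult) auto
  then have "a / lam * (2*r) ^ CARD('d) \<le> prob (X -` C \<inter> space M)"
    by (simp add: ennreal_le_iff)
  also have "\<dots> \<le> prob {\<omega>\<in>space M. a \<le> f (X \<omega>)}"
  proof (rule finite_measure_mono)
    show "X -` C \<inter> space M \<subseteq> {\<omega> \<in> space M. a \<le> f (X \<omega>)}" using in_C by auto
    have "X \<in> borel_measurable M"
      using distributed_measurable[OF distr] by (simp add: measurable_lborel2)
    then show "{\<omega> \<in> space M. a \<le> f (X \<omega>)} \<in> events" using f_meas by measurable
  qed
  finally show ?thesis by simp
qed

lemma (in prob_space) expectation_max_gap_le_exp:
  fixes X :: "nat \<Rightarrow> 'a \<Rightarrow> real^'d" and f :: "real^'d \<Rightarrow> real"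
  assumes indep: "indep_vars (\<lambda>_. borel) X {1..N}"
    and N: "N \<ge> 1"
    and distr: "\<And>n. n \<in> {1..N} \<Longrightarrow> distributed M lborel (X n) (\<lambda>x. ennreal (f x / lam))"
    and lam: "lam > 0"
    and f_meas: "f \<in> borel_measurable borel"
    and nonneg: "\<And>x. f x \<ge> 0" and max: "\<And>x. f x \<le> c"
    and eps: "0 \<le> \<epsilon>" "\<epsilon> \<le> c" and r: "0 \<le> r"
    and cube: "\<And>h. (\<And>i. \<bar>h$i\<bar> \<le> r) \<Longrightarrow> c - \<epsilon> \<le> f (x + h)"
  shows "(\<integral>\<omega>. \<bar>Max ((\<lambda>n. f (X n \<omega>)) ` {1..N}) - c\<bar>\<^sup>2 \<partial>M)
           \<le> \<epsilon>\<^sup>2 + c\<^sup>2 * exp (- real N * ((c - \<epsilon>) * (2*r) ^ CARD('d) / lam))"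
proof -
  define p where "p = (c - \<epsilon>) * (2*r) ^ CARD('d) / lam"
  have p_le: "p \<le> prob {\<omega>\<in>space M. c - \<epsilon> \<le> f (X n \<omega>)}" if "n \<in> {1..N}" for n
    unfolding p_def using eps
    by (intro prob_superlevel_ge_cube[OF distr[OF that] lam r _ cube f_meas]) simp_all
  have "p \<le> 1"
    using p_le[of 1] N prob_le_1 by (meson atLeastAtMost_iff order_refl order_trans)
  then have "(1 - p) ^ N \<le> exp (- p) ^ N"
    using exp_ge_add_one_self[of "- p"] by (intro power_mono) auto
  also have "\<dots> = exp (- real N * p)"
    by (simp add: exp_of_nat_mult[symmetric])
  finally have "c\<^sup>2 * (1 - p) ^ N \<le> c\<^sup>2 * exp (- real N * p)"
    by (simp add: mult_left_mono)
  with expectation_max_gap_le[OF indep N f_meas nonneg max eps(1) p_le]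
  show ?thesis by (simp add: p_def)
qed

lemma Kconst_nonneg:
  assumes "bdd_above (range (hess_abs_sum f))"
  shows "0 \<le> Kconst f"
proof -
  have "0 \<le> hess_abs_sum f x" for x
    unfolding hess_abs_sum_def by (intro sum_nonneg) auto
  also have "hess_abs_sum f x \<le> (SUP x. hess_abs_sum f x)" for x
    using assms by (intro cSUP_upper) auto
  finally show ?thesis by (simp add: Kconst_def)
qed

lemma powr_eq_sqrt_power_mult:
  fixes N K \<beta> :: real
  assumes N: "N > 0" and K: "K > 0"
  shows "K powr (- real n / 2) * N powr (1 - real n * \<beta> / 4) = sqrt (N powr (-\<beta>/2) / K) ^ n * N"
proof -
  have "sqrt (N powr (-\<beta>/2) / K) ^ n = (N powr (-\<beta>/2) / K) powr (real n / 2)"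
    using N K by (simp add: powr_half_sqrt[symmetric] powr_realpow[symmetric] powr_powr)
  also have "\<dots> = N powr (- real n * \<beta> / 4) / K powr (real n / 2)"
    using N K by (simp add: powr_divide powr_powr mult.commute)
  moreover have "N powr (1 - real n * \<beta> / 4) = N powr (- real n * \<beta> / 4) * N"
    using powr_add[of N "- real n * \<beta> / 4" 1] N by simp
  ultimately show ?thesis
    using K by (simp add: powr_minus_divide)
qed

lemma exponent_le_cube_mass:
  fixes N K c lam \<beta> :: real
  assumes N: "N > 0" and K: "K > 0" and c: "N powr (-\<beta>/2) \<le> c" and lam: "lam > 0"
  shows "(c - N powr (-\<beta>/2)) * K powr (- real n / 2) * N powr (1 - real n * \<beta> / 4) / lam
           \<le> N * ((c - N powr (-\<beta>/2)) * (2 * sqrt (N powr (-\<beta>/2) / K)) ^ n / lam)"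
proof -
  have "(c - N powr (-\<beta>/2)) * K powr (- real n / 2) * N powr (1 - real n * \<beta> / 4) / lam
          = N * ((c - N powr (-\<beta>/2)) * sqrt (N powr (-\<beta>/2) / K) ^ n / lam)"
    using powr_eq_sqrt_power_mult[OF N K, of n \<beta>] by (simp add: mult.assoc)
  also have "\<dots> \<le> N * ((c - N powr (-\<beta>/2)) * (2 * sqrt (N powr (-\<beta>/2) / K)) ^ n / lam)"
    using N K c lam by (intro mult_left_mono divide_right_mono power_mono) auto
  finally show ?thesis .
qed

lemma (in prob_space) expectation_max_gap_le_C2:
  fixes X :: "nat \<Rightarrow> 'a \<Rightarrow> real^'d" and f :: "real^'d \<Rightarrow> real"
  assumes C2: "C2 f"
    and nonneg: "\<And>x. f x \<ge> 0"
    and max: "\<And>x. f x \<le> f xstar"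
    and Kfin: "bdd_above (range (hess_abs_sum f))"
    and K: "Kconst f > 0"
    and indep: "indep_vars (\<lambda>_. borel) X {1..N}"
    and N: "N \<ge> 1"
    and distr: "\<And>n. n \<in> {1..N} \<Longrightarrow> distributed M lborel (X n) (\<lambda>x. ennreal (f x / lam))"
    and lam: "lam > 0"
    and eps: "0 \<le> \<epsilon>" "\<epsilon> \<le> f xstar"
  shows "(\<integral>\<omega>. \<bar>Max ((\<lambda>n. f (X n \<omega>)) ` {1..N}) - f xstar\<bar>\<^sup>2 \<partial>M)
          \<le> \<epsilon>\<^sup>2 + (f xstar)\<^sup>2
               * exp (- real N * ((f xstar - \<epsilon>) * (2 * sqrt (\<epsilon> / Kconst f)) ^ CARD('d) / lam))"
proof (rule expectation_max_gap_le_exp[OF indep N distr lam _ nonneg max eps])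
  show "f \<in> borel_measurable borel"
    using C2 unfolding C2_def by (auto intro: borel_measurable_continuous_onI)
  fix h :: "real^'d" assume "\<And>i. \<bar>h$i\<bar> \<le> sqrt (\<epsilon> / Kconst f)"
  from C2_ge_near_max[OF C2 max Kfin this]
  show "f xstar - \<epsilon> \<le> f (xstar + h)" using K eps by simp
qed (use K eps in \<open>auto intro: divide_nonneg_pos\<close>)

lemma (in prob_space) max_sample_error_bound:
  fixes f :: "real^'d \<Rightarrow> real" and X :: "nat \<Rightarrow> 'a \<Rightarrow> real^'d"
  assumes C2: "C2 f"
    and nonneg: "\<And>x. f x \<ge> 0"
    and max: "\<And>x. f x \<le> f xstar"
    and Kfin: "bdd_above (range (hess_abs_sum f))"
    and lampos: "integral\<^sup>L lborel f > 0"
    and indep: "indep_vars (\<lambda>_. borel) X {1..N}"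
    and distr: "\<forall>n\<in>{1..N}. distributed M lborel (X n) (\<lambda>x. ennreal (f x / integral\<^sup>L lborel f))"
    and N_large: "real N > f xstar powr (2 / \<beta>)"
  shows "(\<integral>\<omega>. \<bar>Max ((\<lambda>n. f (X n \<omega>)) ` {1..N}) - f xstar\<bar>\<^sup>2 \<partial>M)
          \<le> real N powr (-\<beta>)
             + (f xstar)\<^sup>2 * exp (- (f xstar - real N powr (-\<beta>/2))
                 * Kconst f powr (- real CARD('d) / 2)
                 * real N powr (1 - real CARD('d) * \<beta> / 4)
                 / integral\<^sup>L lborel f)"
proof -
  define c where "c = f xstar"
  define \<epsilon> where "\<epsilon> = real N powr (-\<beta>/2)"
  define K where "K = Kconst f"
  define lam where "lam = integral\<^sup>L lborel f"
  define A where "A = (c - \<epsilon>) * K powr (- real CARD('d) / 2)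
                        * real N powr (1 - real CARD('d) * \<beta> / 4) / lam"
  define E where "E = (\<integral>\<omega>. \<bar>Max ((\<lambda>n. f (X n \<omega>)) ` {1..N}) - c\<bar>\<^sup>2 \<partial>M)"
  have N_pos: "real N > 0"
    using N_large by (smt (verit) powr_ge_zero)
  then have N: "N \<ge> 1" by simp
  have lam: "lam > 0" using lampos by (simp add: lam_def)
  have "E \<le> \<epsilon>\<^sup>2 + c\<^sup>2 * exp (- A)"
  proof (cases "\<epsilon> < c \<and> 0 < K")
    case True
    define r where "r = sqrt (\<epsilon> / K)"
    have "A \<le> real N * ((c - \<epsilon>) * (2 * r) ^ CARD('d) / lam)"
      unfolding A_def r_def \<epsilon>_def using True N_pos lam
      by (intro exponent_le_cube_mass) (auto simp: \<epsilon>_def)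
    then have "c\<^sup>2 * exp (- real N * ((c - \<epsilon>) * (2 * r) ^ CARD('d) / lam)) \<le> c\<^sup>2 * exp (- A)"
      by (intro mult_left_mono) auto
    moreover have "E \<le> \<epsilon>\<^sup>2 + c\<^sup>2 * exp (- real N * ((c - \<epsilon>) * (2 * r) ^ CARD('d) / lam))"
      unfolding E_def c_def r_def K_def
      using True distr N_pos
      by (intro expectation_max_gap_le_C2[OF C2 nonneg max Kfin _ indep N _ lam])
        (auto simp: lam_def c_def K_def \<epsilon>_def)
    ultimately show ?thesis by simp
  next
    case False
    have "E \<le> c\<^sup>2"
      unfolding E_def c_def
      using C2 max by (intro expectation_max_gap_le_sq[OF indep N _ nonneg])
        (auto simp: C2_def intro: borel_measurable_continuous_onI)
    have "A \<le> 0"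
    proof (cases "\<epsilon> < c")
      case True
      \<comment> \<open>then \<open>K\<^sub>f = 0\<close>, and \<open>0 powr a = 0\<close> makes \<open>A\<close> vanish\<close>
      then have "K = 0" using False Kconst_nonneg[OF Kfin] by (simp add: K_def)
      then show ?thesis by (simp add: A_def)
    next
      case False
      then show ?thesis
        using lam by (auto simp: A_def intro!: divide_nonpos_pos mult_nonpos_nonneg)
    qed
    then have "c\<^sup>2 * 1 \<le> c\<^sup>2 * exp (- A)" by (intro mult_left_mono) auto
    with \<open>E \<le> c\<^sup>2\<close> show ?thesis by (simp add: add_increasing)
  qed
  moreover have "\<epsilon>\<^sup>2 = real N powr (-\<beta>)"
    unfolding \<epsilon>_def using N_pos by (simp add: power2_eq_square powr_add[symmetric])
  moreover have "- A = - (f xstar - real N powr (-\<beta>/2)) * Kconst f powr (- real CARD('d) / 2)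
                         * real N powr (1 - real CARD('d) * \<beta> / 4) / integral\<^sup>L lborel f"
    unfolding A_def c_def \<epsilon>_def K_def lam_def by (simp only: mult_minus_left minus_divide_left)
  ultimately show ?thesis by (simp add: E_def c_def)
qed

lemma integral_pos_imp_max_pos:
  fixes f :: "'b::euclidean_space \<Rightarrow> real"
  assumes "\<And>x. f x \<ge> 0" and "\<And>x. f x \<le> f xstar" and "integral\<^sup>L lborel f > 0"
  shows "f xstar > 0"
proof (rule ccontr)
  assume "\<not> f xstar > 0"
  with assms(1,2) have "f = (\<lambda>_. 0)" by (meson antisym not_less order_trans ext)
  with assms(3) show False by simp
qed

lemma isCont_ge_on_cube:
  fixes f :: "real^'d \<Rightarrow> real"
  assumes "isCont f x" and "\<epsilon> > 0"
  obtains r where "r > 0" "\<And>h. (\<And>i. \<bar>h$i\<bar> \<le> r) \<Longrightarrow> f x - \<epsilon> \<le> f (x + h)"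
proof -
  obtain \<delta> where \<delta>: "\<delta> > 0" "\<And>y. dist y x < \<delta> \<Longrightarrow> dist (f y) (f x) < \<epsilon>"
    using assms unfolding continuous_at_eps_delta by blast
  define r where "r = \<delta> / (2 * real CARD('d))"
  show thesis
  proof (rule that)
    show "r > 0" using \<delta> by (simp add: r_def)
    fix h :: "real^'d" assume h: "\<And>i. \<bar>h$i\<bar> \<le> r"
    have "norm h \<le> (\<Sum>i\<in>UNIV. \<bar>h$i\<bar>)" by (rule norm_le_l1_cart)
    also have "\<dots> \<le> (\<Sum>i\<in>(UNIV::'d set). r)" using h by (intro sum_mono)
    also have "\<dots> < \<delta>" using \<delta> by (simp add: r_def)
    finally have "dist (f (x + h)) (f x) < \<epsilon>" by (intro \<delta>(2)) (simp add: dist_norm)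
    then show "f x - \<epsilon> \<le> f (x + h)" by (simp add: dist_real_def)
  qed
qed

lemma (in prob_space) max_sample_error_tendsto_zero:
  fixes f :: "real^'d \<Rightarrow> real" and X :: "nat \<Rightarrow> 'a \<Rightarrow> real^'d"
  assumes cont: "continuous_on UNIV f"
    and nonneg: "\<And>x. f x \<ge> 0"
    and max: "\<And>x. f x \<le> f xstar"
    and lampos: "integral\<^sup>L lborel f > 0"
    and indep: "indep_vars (\<lambda>_. borel) X UNIV"
    and distr: "\<forall>n. distributed M lborel (X n) (\<lambda>x. ennreal (f x / integral\<^sup>L lborel f))"
  shows "(\<lambda>N. \<integral>\<omega>. \<bar>Max ((\<lambda>n. f (X n \<omega>)) ` {1..N}) - f xstar\<bar>\<^sup>2 \<partial>M) \<longlonglongrightarrow> 0"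
proof (rule LIMSEQ_I)
  fix e :: real assume e: "e > 0"
  define c where "c = f xstar"
  define lam where "lam = integral\<^sup>L lborel f"
  have c: "c > 0" unfolding c_def by (rule integral_pos_imp_max_pos[OF nonneg max lampos])
  have lam: "lam > 0" using lampos by (simp add: lam_def)
  define \<epsilon> where "\<epsilon> = min (c/2) (sqrt (e/2))"
  have eps: "0 < \<epsilon>" "\<epsilon> < c"
    using c e by (auto simp: \<epsilon>_def)
  have "\<epsilon>\<^sup>2 \<le> (sqrt (e/2))\<^sup>2"
    using eps(1) by (intro power_mono) (auto simp: \<epsilon>_def)
  then have eps_sq: "\<epsilon>\<^sup>2 \<le> e/2" using e by simp
  have "isCont f xstar" using cont by (simp add: continuous_on_eq_continuous_at)
  then obtain r where r: "r > 0" and cube: "\<And>h. (\<And>i. \<bar>h$i\<bar> \<le> r) \<Longrightarrow> c - \<epsilon> \<le> f (xstar + h)"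
    unfolding c_def using isCont_ge_on_cube[OF _ eps(1)] by blast
  define p where "p = (c - \<epsilon>) * (2*r) ^ CARD('d) / lam"
  have "p > 0" using eps r lam by (simp add: p_def)
  then have "(\<lambda>N. c\<^sup>2 * exp (-p) ^ N) \<longlonglongrightarrow> c\<^sup>2 * 0"
    by (intro tendsto_mult LIMSEQ_power_zero) auto
  then have "\<forall>\<^sub>F N in sequentially. c\<^sup>2 * exp (- real N * p) < e/2"
    using e by (intro order_tendstoD(2)) (auto simp: exp_of_nat_mult[symmetric] mult.commute)
  then obtain N0 where N0: "\<And>N. N \<ge> N0 \<Longrightarrow> c\<^sup>2 * exp (- real N * p) < e/2"
    unfolding eventually_sequentially by blast
  show "\<exists>N0. \<forall>N\<ge>N0. norm ((\<integral>\<omega>. \<bar>Max ((\<lambda>n. f (X n \<omega>)) ` {1..N}) - f xstar\<bar>\<^sup>2 \<partial>M) - 0) < e"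
  proof (intro exI allI impI)
    fix N assume N: "max N0 1 \<le> N"
    have "indep_vars (\<lambda>_. borel) X {1..N}" using indep by (rule indep_vars_subset) simp
    moreover have "distributed M lborel (X n) (\<lambda>x. ennreal (f x / lam))" for n
      using distr by (simp add: lam_def)
    moreover have "f x \<le> c" for x using max by (simp add: c_def)
    ultimately have "(\<integral>\<omega>. \<bar>Max ((\<lambda>n. f (X n \<omega>)) ` {1..N}) - c\<bar>\<^sup>2 \<partial>M)
                     \<le> \<epsilon>\<^sup>2 + c\<^sup>2 * exp (- real N * p)"
      unfolding p_def using N eps r
      by (intro expectation_max_gap_le_exp[OF _ _ _ lam borel_measurable_continuous_onI[OF cont]
            nonneg _ _ _ _ cube]) auto
    then show "norm ((\<integral>\<omega>. \<bar>Max ((\<lambda>n. f (X n \<omega>)) ` {1..N}) - f xstar\<bar>\<^sup>2 \<partial>M) - 0) < e"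
      using N0[of N] N eps_sq by (simp add: c_def)
  qed
qed

theorem corollary5p2:
  fixes f :: "real^'d \<Rightarrow> real" and xstar :: "real^'d"
  assumes C2: "C2 f"
    and nonneg: "\<And>x. f x \<ge> 0"
    and max: "\<And>x. f x \<le> f xstar"
    and Kfin: "bdd_above (range (hess_abs_sum f))"
    and integ: "integrable lborel f"
    and lampos: "integral\<^sup>L lborel f > 0"
  shows
    "(\<forall>(M::'b measure) (X :: nat \<Rightarrow> 'b \<Rightarrow> real^'d) (N::nat) (\<beta>::real).
        prob_space M \<longrightarrow>
        prob_space.indep_vars M (\<lambda>_. borel) X {1..N} \<longrightarrow>
        (\<forall>n\<in>{1..N}. distributed M lborel (X n)
             (\<lambda>x. ennreal (f x / integral\<^sup>L lborel f))) \<longrightarrow>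
        0 < \<beta> \<longrightarrow> \<beta> < 4 / real CARD('d) \<longrightarrow>
        real N > f xstar powr (2 / \<beta>) \<longrightarrow>
        integral\<^sup>L M (\<lambda>\<omega>. \<bar>Max ((\<lambda>n. f (X n \<omega>)) ` {1..N}) - f xstar\<bar>\<^sup>2)
          \<le> real N powr (-\<beta>)
             + (f xstar)\<^sup>2 * exp (- (f xstar - real N powr (-\<beta>/2))
                 * Kconst f powr (- real CARD('d) / 2)
                 * real N powr (1 - real CARD('d) * \<beta> / 4)
                 / integral\<^sup>L lborel f))
     \<and>
     (\<forall>(M::'b measure) (X :: nat \<Rightarrow> 'b \<Rightarrow> real^'d).
        prob_space M \<longrightarrow>
        prob_space.indep_vars M (\<lambda>_. borel) X UNIV \<longrightarrow>
        (\<forall>n. distributed M lborel (X n)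
             (\<lambda>x. ennreal (f x / integral\<^sup>L lborel f))) \<longrightarrow>
        (\<lambda>N. integral\<^sup>L M (\<lambda>\<omega>. \<bar>Max ((\<lambda>n. f (X n \<omega>)) ` {1..N}) - f xstar\<bar>\<^sup>2))
          \<longlonglongrightarrow> 0)"
proof -
  have "continuous_on UNIV f" using C2 by (simp add: C2_def)
  then show ?thesis
    using prob_space.max_sample_error_bound[OF _ C2 nonneg max Kfin lampos]
      prob_space.max_sample_error_tendsto_zero[OF _ _ nonneg max lampos]
    by blast
qed

end
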